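(* Let $L=\{0,1,\dots,m\}^n$ ordered componentwise, with top $\top=(m,\dots,m)$, and let $f_1,\dots,f_n:L\to L$ be monotone and deflationary. (a) Any non-interleaving execution with update-only-on-change starting from $G_0=\top$ under a fair scheduler is eventually constant at the greatest common fixed point of $\{f_1,\dots,f_n\}$. (b) If moreover each $f_i$ is $i$-local, then any distributed execution starting from $G_0=\top$ with views satisfying bounded staleness with parameter $T$ and a strongly fair scheduler with parameter $\tau$ is eventually constant at the greatest common fixed point of $\{f_1,\dots,f_n\}$.
   Context: A function $f$ is deflationary if $f(G)\le G$ for all $G$, monotone if $G\le H\Rightarrow f(G)\le f(H)$; $f_i$ is $i$-local if $f_i(G)[j]=G[j]$ for all $G$ and $j\ne i$. Non-interleaving execution with update-only-on-change: rounds $t=0,1,\dots$ with committed states $G_t$; in round $t$ each $f_i$, $i\in S_t$, runs concurrently, reading a vector $X$ whose coordinate $X[k]$ is either $G_t[k]$ or the value of some write to coordinate $k$ during the round, computing $H=f_i(X)$, and writing $H[k]$ to coordinate $k$ if and only if $H[k]\ne X[k]$; $G_{t+1}[k]=G_t[k]$ if no write to $k$ occurred, otherwise it is the value of one of the writes to $k$ in the round. Fair: each $i$ is in $S_t$ for infinitely many $t$. Distributed execution: $G_{t+1}[i]=f_i(\widehat G^{(i)}_t)[i]$ for $i\in S_t$, $G_{t+1}[j]=G_t[j]$ otherwise; bounded staleness with parameter $T$ means $\widehat G^{(i)}_t[i]=G_t[i]$ and $\widehat G^{(i)}_t[j]=G_s[j]$ for some $s$ with $\max(0,t-T)\le s\le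 t$; strong fairness with parameter $\tau$ means every index lies in $S_t$ for some $t$ in every window of $\tau$ consecutive rounds. *)

theory Defs
  imports Main
begin

text \<open>States are vectors indexed by a finite type 'n (the n coordinates), with entries
in {0..m}; the order is the componentwise (pointwise) order on functions.
There is one function f i per coordinate i.\<close>

definition lat :: "nat \<Rightarrow> ('n \<Rightarrow> nat) set" where
  "lat m = {G. \<forall>k. G k \<le> m}"

definition top_state :: "nat \<Rightarrow> ('n \<Rightarrow> nat)" where
  "top_state m = (\<lambda>_. m)"

definition deflationary_on :: "('n \<Rightarrow> nat) set \<Rightarrow> (('n \<Rightarrow> nat) \<Rightarrow> ('n \<Rightarrow> nat)) \<Rightarrow> bool" where
  "deflationary_on L g \<longleftrightarrow> (\<forall>G\<in>L. g G \<le> G)"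

definition monotone_on_lat :: "('n \<Rightarrow> nat) set \<Rightarrow> (('n \<Rightarrow> nat) \<Rightarrow> ('n \<Rightarrow> nat)) \<Rightarrow> bool" where
  "monotone_on_lat L g \<longleftrightarrow> (\<forall>G\<in>L. \<forall>H\<in>L. G \<le> H \<longrightarrow> g G \<le> g H)"

definition local_on :: "('n \<Rightarrow> nat) set \<Rightarrow> 'n \<Rightarrow> (('n \<Rightarrow> nat) \<Rightarrow> ('n \<Rightarrow> nat)) \<Rightarrow> bool" where
  "local_on L i g \<longleftrightarrow> (\<forall>G\<in>L. \<forall>j. j \<noteq> i \<longrightarrow> g G j = G j)"

definition is_gcfp :: "('n \<Rightarrow> nat) set \<Rightarrow> ('n \<Rightarrow> ('n \<Rightarrow> nat) \<Rightarrow> ('n \<Rightarrow> nat)) \<Rightarrow> ('n \<Rightarrow> nat) \<Rightarrow> bool" where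
  "is_gcfp L f P \<longleftrightarrow> P \<in> L \<and> (\<forall>i. f i P = P) \<and>
     (\<forall>Q\<in>L. (\<forall>i. f i Q = Q) \<longrightarrow> Q \<le> P)"

definition eventually_const_at :: "(nat \<Rightarrow> 'a) \<Rightarrow> 'a \<Rightarrow> bool" where
  "eventually_const_at G P \<longleftrightarrow> (\<exists>t0. \<forall>t\<ge>t0. G t = P)"

definition fair :: "(nat \<Rightarrow> 'n set) \<Rightarrow> bool" where
  "fair S \<longleftrightarrow> (\<forall>i. infinite {t. i \<in> S t})"

definition strongly_fair :: "nat \<Rightarrow> (nat \<Rightarrow> 'n set) \<Rightarrow> bool" where
  "strongly_fair \<tau> S \<longleftrightarrow> (\<forall>i t0. \<exists>t. t0 \<le> t \<and> t < t0 + \<tau> \<and> i \<in> S t)"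

text \<open>In round t, each scheduled i reads the vector X t i and computes f i (X t i);
  it writes coordinate k iff the computed value differs from the value it read.
  Concurrency inside a round is modelled by a write-time ranking rank t: a read of
  coordinate k by i either returns the committed value G t k, or the value of a write
  to k by some scheduled j whose writes happen before i's write (rank t j < rank t i);
  since every function first reads and then writes, the reads-from relation of a
  round is acyclic, which the ranking expresses.\<close>

definition writes :: "('n \<Rightarrow> ('n \<Rightarrow> nat) \<Rightarrow> ('n \<Rightarrow> nat)) \<Rightarrow> ('n \<Rightarrow> nat) \<Rightarrow> 'n \<Rightarrow> 'n \<Rightarrow> bool" where
  "writes f Xj j k \<longleftrightarrow> f j Xj k \<noteq> Xj k"

definition nonint_exec ::
  "('n \<Rightarrow> ('n \<Rightarrow> nat) \<Rightarrow> ('n \<Rightarrow> nat)) \<Rightarrow> (nat \<Rightarrow> 'n set) \<Rightarrow> (nat \<Rightarrow> 'n \<Rightarrow> 'n \<Rightarrow> nat)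
    \<Rightarrow> (nat \<Rightarrow> 'n \<Rightarrow> nat) \<Rightarrow> (nat \<Rightarrow> 'n \<Rightarrow> nat) \<Rightarrow> bool" where
  "nonint_exec f S X rank G \<longleftrightarrow>
     (\<forall>t. \<forall>i\<in>S t. \<forall>k.
        X t i k = G t k \<or>
        (\<exists>j\<in>S t. rank t j < rank t i \<and> writes f (X t j) j k \<and> X t i k = f j (X t j) k)) \<and>
     (\<forall>t k. ((\<not>(\<exists>j\<in>S t. writes f (X t j) j k)) \<longrightarrow> G (Suc t) k = G t k) \<and>
            ((\<exists>j\<in>S t. writes f (X t j) j k) \<longrightarrow>
               (\<exists>j\<in>S t. writes f (X t j) j k \<and> G (Suc t) k = f j (X t j) k)))"

text \<open>Distributed execution: V t i is the view of i in round t.\<close>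
definition dist_exec ::
  "('n \<Rightarrow> ('n \<Rightarrow> nat) \<Rightarrow> ('n \<Rightarrow> nat)) \<Rightarrow> (nat \<Rightarrow> 'n set) \<Rightarrow> (nat \<Rightarrow> 'n \<Rightarrow> 'n \<Rightarrow> nat)
    \<Rightarrow> (nat \<Rightarrow> 'n \<Rightarrow> nat) \<Rightarrow> bool" where
  "dist_exec f S V G \<longleftrightarrow>
     (\<forall>t i. G (Suc t) i = (if i \<in> S t then f i (V t i) i else G t i))"

text \<open>Bounded staleness with parameter T (nat subtraction gives max(0, t - T)).\<close>
definition bounded_staleness ::
  "nat \<Rightarrow> (nat \<Rightarrow> 'n set) \<Rightarrow> (nat \<Rightarrow> 'n \<Rightarrow> 'n \<Rightarrow> nat) \<Rightarrow> (nat \<Rightarrow> 'n \<Rightarrow> nat) \<Rightarrow> bool" where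
  "bounded_staleness T S V G \<longleftrightarrow>
     (\<forall>t. \<forall>i\<in>S t. V t i i = G t i \<and>
        (\<forall>j. \<exists>s. t - T \<le> s \<and> s \<le> t \<and> V t i j = G s j))"

end

theory Submission
  imports Defs "HOL-Library.Infinite_Set"
begin

text \<open>Both kinds of execution keep every state (and every vector that is read) inside the
  set of states of the lattice lying above all common fixed points: the top state is there,
  monotonicity carries this property through each f i, and it is checked coordinatewise,
  so it survives the mixing of coordinates coming from different reads and writes.
  Deflationarity makes the committed states decrease, so on the finite lattice they become
  stationary at some Q. Fairness then schedules every i after stabilisation, and a
  computation that changes nothing shows f i Q = Q. Being a common fixed point above all
  common fixed points, Q is the greatest one.\<close>

definition above_fixpoints :: "nat \<Rightarrow> ('n \<Rightarrow> ('n \<Rightarrow> nat) \<Rightarrow> ('n \<Rightarrow> nat)) \<Rightarrow> ('n \<Rightarrow> nat) set"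
  where "above_fixpoints m f = {H \<in> lat m. \<forall>R\<in>lat m. (\<forall>i. f i R = R) \<longrightarrow> R \<le> H}"

lemma antitone_nat_vectors_stabilise:
  fixes G :: "nat \<Rightarrow> 'n::finite \<Rightarrow> nat"
  assumes "\<And>t. G (Suc t) \<le> G t"
  shows "\<exists>t0. \<forall>t\<ge>t0. G t = G t0"
proof -
  have anti: "antimono G"
    using assms by (simp add: antimono_iff_le_Suc)
  obtain t0 where min: "\<And>t. sum (G t0) UNIV \<le> sum (G t) UNIV"
    using ex_has_least_nat[of "\<lambda>_. True" 0 "\<lambda>t. sum (G t) UNIV"] by auto
  have "G t = G t0" if "t0 \<le> t" for t
  proof (rule ccontr)
    assume "G t \<noteq> G t0"
    moreover have le: "G t \<le> G t0"
      using anti that by (rule antimonoD)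
    ultimately obtain k where "G t k < G t0 k"
      by (auto simp: le_fun_def order_less_le)
    with le have "sum (G t) UNIV < sum (G t0) UNIV"
      by (intro sum_strict_mono_ex1) (auto simp: le_fun_def)
    with min[of t] show False
      by simp
  qed
  then show ?thesis
    by blast
qed

lemma top_state_above_fixpoints: "top_state m \<in> above_fixpoints m f"
  by (auto simp: above_fixpoints_def lat_def top_state_def le_fun_def)

lemma above_fixpoints_mix:
  assumes "\<And>k. \<exists>Y\<in>above_fixpoints m f. H k = Y k"
  shows "H \<in> above_fixpoints m f"
proof -
  have "H k \<le> m \<and> (\<forall>R\<in>lat m. (\<forall>i. f i R = R) \<longrightarrow> R k \<le> H k)" for k
    using assms[of k] by (fastforce simp: above_fixpoints_def lat_def le_fun_def)
  then show ?thesis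
    by (auto simp: above_fixpoints_def lat_def le_fun_def)
qed

lemma above_fixpoints_apply:
  assumes maps: "\<forall>i. \<forall>G\<in>lat m. f i G \<in> lat m"
    and mono: "\<forall>i. monotone_on_lat (lat m) (f i)"
    and X: "X \<in> above_fixpoints m f"
  shows "f i X \<in> above_fixpoints m f"
proof -
  have "R \<le> f i X" if "R \<in> lat m" "\<forall>j. f j R = R" for R
  proof -
    have "f i R \<le> f i X"
      using mono that X unfolding monotone_on_lat_def above_fixpoints_def by blast
    then show ?thesis
      using that by simp
  qed
  then show ?thesis
    using maps X by (auto simp: above_fixpoints_def)
qed

lemma deflationary_apply_le:
  assumes "\<forall>i. deflationary_on (lat m) (f i)" and "X \<in> above_fixpoints m f"
  shows "f i X \<le> X"
  using assms by (auto simp: deflationary_on_def above_fixpoints_def)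

lemma stationary_limit_is_gcfp:
  fixes G :: "nat \<Rightarrow> 'n::finite \<Rightarrow> nat"
  assumes above: "\<And>t. G t \<in> above_fixpoints m f"
    and dec: "\<And>t. G (Suc t) \<le> G t"
    and stationary_fixed: "\<And>t0 i. \<forall>t\<ge>t0. G t = G t0 \<Longrightarrow> f i (G t0) = G t0"
  shows "\<exists>P. is_gcfp (lat m) f P \<and> eventually_const_at G P"
proof -
  obtain t0 where "\<forall>t\<ge>t0. G t = G t0"
    using antitone_nat_vectors_stabilise[of G, OF dec] by blast
  moreover from this have "f i (G t0) = G t0" for i
    by (rule stationary_fixed)
  ultimately show ?thesis
    using above[of t0] unfolding is_gcfp_def above_fixpoints_def eventually_const_at_def
    by blast
qed

context
  fixes m :: nat and f :: "'n::finite \<Rightarrow> ('n \<Rightarrow> nat) \<Rightarrow> ('n \<Rightarrow> nat)"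
  assumes maps: "\<forall>i. \<forall>G\<in>lat m. f i G \<in> lat m"
    and mono: "\<forall>i. monotone_on_lat (lat m) (f i)"
    and defl: "\<forall>i. deflationary_on (lat m) (f i)"
begin

text \<open>A read sees only committed values and writes of processes of smaller rank,
  hence the induction on the rank.\<close>

lemma nonint_read_above_fixpoints:
  assumes exec: "nonint_exec f S X rank G"
    and Gt: "G t \<in> above_fixpoints m f"
    and "i \<in> S t"
  shows "X t i \<in> above_fixpoints m f \<and> X t i \<le> G t"
  using \<open>i \<in> S t\<close>
proof (induction "rank t i" arbitrary: i rule: less_induct)
  case less
  have written: "f j (X t j) \<in> above_fixpoints m f \<and> f j (X t j) \<le> G t"
    if "j \<in> S t" "rank t j < rank t i" for j
  proof -
    have "X t j \<in> above_fixpoints m f" "X t j \<le> G t"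
      using less.hyps that by blast+
    then show ?thesis
      using above_fixpoints_apply[OF maps mono] deflationary_apply_le[OF defl]
      by (blast intro: order_trans)
  qed
  have "X t i k = G t k \<or> (\<exists>j\<in>S t. rank t j < rank t i \<and> X t i k = f j (X t j) k)" for k
    using exec less.prems unfolding nonint_exec_def by blast
  then have "\<exists>Y\<in>above_fixpoints m f. Y \<le> G t \<and> X t i k = Y k" for k
    using Gt written by blast
  then show ?case
    by (metis above_fixpoints_mix le_funD le_funI)
qed

lemma nonint_commit_above_fixpoints:
  assumes exec: "nonint_exec f S X rank G"
    and Gt: "G t \<in> above_fixpoints m f"
  shows "G (Suc t) \<in> above_fixpoints m f \<and> G (Suc t) \<le> G t"
proof -
  have written: "f j (X t j) \<in> above_fixpoints m f \<and> f j (X t j) \<le> G t" if "j \<in> S t" for j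
    using nonint_read_above_fixpoints[OF exec Gt that]
      above_fixpoints_apply[OF maps mono] deflationary_apply_le[OF defl]
    by (blast intro: order_trans)
  have "G (Suc t) k = G t k \<or> (\<exists>j\<in>S t. G (Suc t) k = f j (X t j) k)" for k
    using exec unfolding nonint_exec_def by metis
  then have "\<exists>Y\<in>above_fixpoints m f. Y \<le> G t \<and> G (Suc t) k = Y k" for k
    using Gt written by blast
  then show ?thesis
    by (metis above_fixpoints_mix le_funD le_funI)
qed

lemma nonint_exec_above_fixpoints:
  assumes "nonint_exec f S X rank G" and "G 0 = top_state m"
  shows "G t \<in> above_fixpoints m f"
  by (induction t) (use assms top_state_above_fixpoints nonint_commit_above_fixpoints in auto)

text \<open>Every write strictly lowers the coordinate below its committed value, so a round
  that leaves the committed state unchanged performs no writes at all.\<close>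

lemma nonint_stationary_round_fixes:
  assumes exec: "nonint_exec f S X rank G"
    and Gt: "G t \<in> above_fixpoints m f"
    and stat: "G (Suc t) = G t"
    and "i \<in> S t"
  shows "f i (G t) = G t"
proof -
  have no_write: "\<not> writes f (X t j) j k" if jS: "j \<in> S t" for j k
  proof
    assume "writes f (X t j) j k"
    with jS obtain j' where "j' \<in> S t" "writes f (X t j') j' k" and new: "G (Suc t) k = f j' (X t j') k"
      using exec unfolding nonint_exec_def by blast
    have "f j' (X t j') \<le> X t j'" "X t j' \<le> G t"
      using nonint_read_above_fixpoints[OF exec Gt \<open>j' \<in> S t\<close>] deflationary_apply_le[OF defl]
      by blast+
    with \<open>writes f (X t j') j' k\<close> have "f j' (X t j') k < X t j' k" "X t j' k \<le> G t k"
      by (auto simp: writes_def le_fun_def order_less_le)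
    with new stat show False
      by simp
  qed
  have "X t i = G t"
  proof
    fix k
    show "X t i k = G t k"
      using exec \<open>i \<in> S t\<close> no_write unfolding nonint_exec_def by blast
  qed
  with no_write[OF \<open>i \<in> S t\<close>] show ?thesis
    by (auto simp: writes_def)
qed

lemma nonint_exec_converges:
  assumes exec: "nonint_exec f S X rank G" and "G 0 = top_state m" and "fair S"
  shows "\<exists>P. is_gcfp (lat m) f P \<and> eventually_const_at G P"
proof (rule stationary_limit_is_gcfp)
  show above: "G t \<in> above_fixpoints m f" for t
    using nonint_exec_above_fixpoints[OF exec \<open>G 0 = top_state m\<close>] .
  show "G (Suc t) \<le> G t" for t
    using nonint_commit_above_fixpoints[OF exec above] by blast
  fix t0 i
  assume const: "\<forall>t\<ge>t0. G t = G t0"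
  obtain t where "t0 \<le> t" "i \<in> S t"
    using \<open>fair S\<close> unfolding fair_def infinite_nat_iff_unbounded_le by blast
  with const have "G t = G t0" "G (Suc t) = G t0"
    by (blast intro: le_SucI)+
  with nonint_stationary_round_fixes[OF exec above _ \<open>i \<in> S t\<close>]
  show "f i (G t0) = G t0"
    by metis
qed

lemma dist_view_above_fixpoints:
  assumes "bounded_staleness T S V G" and "i \<in> S t"
    and past: "\<And>s. s \<le> t \<Longrightarrow> G s \<in> above_fixpoints m f"
  shows "V t i \<in> above_fixpoints m f"
proof (rule above_fixpoints_mix)
  fix j
  obtain s where "s \<le> t" "V t i j = G s j"
    using assms(1,2) unfolding bounded_staleness_def by blast
  then show "\<exists>Y\<in>above_fixpoints m f. V t i j = Y j"
    using past by blast
qed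

lemma dist_exec_above_fixpoints:
  assumes exec: "dist_exec f S V G" and stale: "bounded_staleness T S V G"
    and "G 0 = top_state m"
  shows "G t \<in> above_fixpoints m f"
proof (induction t rule: less_induct)
  case (less t)
  show ?case
  proof (cases t)
    case 0
    then show ?thesis
      using \<open>G 0 = top_state m\<close> top_state_above_fixpoints by simp
  next
    case (Suc t')
    have "f k (V t' k) \<in> above_fixpoints m f" if "k \<in> S t'" for k
      using dist_view_above_fixpoints[OF stale that] less.IH Suc
        above_fixpoints_apply[OF maps mono] by simp
    then have "\<exists>Y\<in>above_fixpoints m f. G t k = Y k" for k
      using exec less.IH[of t'] Suc unfolding dist_exec_def by (cases "k \<in> S t'") auto
    then show ?thesis
      by (rule above_fixpoints_mix)
  qed
qed

lemma dist_exec_decreasing: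
  assumes exec: "dist_exec f S V G" and stale: "bounded_staleness T S V G"
    and "G 0 = top_state m"
  shows "G (Suc t) \<le> G t"
proof (rule le_funI)
  fix i
  show "G (Suc t) i \<le> G t i"
  proof (cases "i \<in> S t")
    case True
    have "f i (V t i) \<le> V t i"
      using dist_view_above_fixpoints[OF stale True] dist_exec_above_fixpoints[OF assms]
        deflationary_apply_le[OF defl] by blast
    moreover have "V t i i = G t i"
      using stale True unfolding bounded_staleness_def by blast
    ultimately show ?thesis
      using exec True unfolding dist_exec_def by (metis le_funD)
  qed (use exec in \<open>simp add: dist_exec_def\<close>)
qed

text \<open>Staleness is at most T, so from round t0 + T on the view of a scheduled process is
  the stationary state Q itself; by locality, f i Q = Q then only has to be checked at
  coordinate i, the value committed in that round.\<close>

lemma dist_stationary_fixes: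
  assumes loc: "local_on (lat m) i (f i)"
    and exec: "dist_exec f S V G" and stale: "bounded_staleness T S V G"
    and Q: "Q \<in> lat m" and const: "\<forall>t\<ge>t0. G t = Q"
    and "t0 + T \<le> t" and "i \<in> S t"
  shows "f i Q = Q"
proof
  fix j
  have "V t i = Q"
  proof
    fix k
    obtain s where "t - T \<le> s" "V t i k = G s k"
      using stale \<open>i \<in> S t\<close> unfolding bounded_staleness_def by blast
    with const \<open>t0 + T \<le> t\<close> show "V t i k = Q k"
      by simp
  qed
  then have "f i Q i = Q i"
    using exec const \<open>t0 + T \<le> t\<close> \<open>i \<in> S t\<close> unfolding dist_exec_def
    by (metis le_SucI le_add1 order_trans)
  then show "f i Q j = Q j"
    using loc Q unfolding local_on_def by (cases "j = i") auto
qed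

lemma dist_exec_converges:
  assumes loc: "\<forall>i. local_on (lat m) i (f i)"
    and exec: "dist_exec f S V G" and stale: "bounded_staleness T S V G"
    and "G 0 = top_state m" and "strongly_fair \<tau> S"
  shows "\<exists>P. is_gcfp (lat m) f P \<and> eventually_const_at G P"
proof (rule stationary_limit_is_gcfp)
  show above: "G t \<in> above_fixpoints m f" for t
    using dist_exec_above_fixpoints[OF exec stale \<open>G 0 = top_state m\<close>] .
  show "G (Suc t) \<le> G t" for t
    using dist_exec_decreasing[OF exec stale \<open>G 0 = top_state m\<close>] .
  fix t0 i
  assume "\<forall>t\<ge>t0. G t = G t0"
  moreover obtain t where "t0 + T \<le> t" "i \<in> S t"
    using \<open>strongly_fair \<tau> S\<close> unfolding strongly_fair_def by blast
  moreover have "G t0 \<in> lat m"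
    using above by (simp add: above_fixpoints_def)
  ultimately show "f i (G t0) = G t0"
    using dist_stationary_fixes[OF loc[rule_format] exec stale] by blast
qed

end

theorem corollary2:
  fixes m :: nat and f :: "'n::finite \<Rightarrow> ('n \<Rightarrow> nat) \<Rightarrow> ('n \<Rightarrow> nat)"
  assumes maps: "\<forall>i. \<forall>G\<in>lat m. f i G \<in> lat m"
    and mono: "\<forall>i. monotone_on_lat (lat m) (f i)"
    and defl: "\<forall>i. deflationary_on (lat m) (f i)"
  shows "(\<forall>S X rank G. G 0 = top_state m \<and> fair S \<and> nonint_exec f S X rank G \<longrightarrow>
            (\<exists>P. is_gcfp (lat m) f P \<and> eventually_const_at G P))
       \<and> ((\<forall>i. local_on (lat m) i (f i)) \<longrightarrow>
          (\<forall>S V G T \<tau>. G 0 = top_state m \<and> dist_exec f S V G \<and> bounded_staleness T S V G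
              \<and> strongly_fair \<tau> S \<longrightarrow>
            (\<exists>P. is_gcfp (lat m) f P \<and> eventually_const_at G P)))"
  using nonint_exec_converges[OF maps mono defl] dist_exec_converges[OF maps mono defl]
  by blast

end
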